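(* Let $\lambda\in\mathbb R$ and $\eta\ge 0$. Let $(P_n)_{n\ge0}$ be the monic polynomials determined by $P_{-1}=0$, $P_0=1$ and $$xP_n(x)=P_{n+1}(x)+\lambda n P_n(x)+n\bigl(1+\eta(n-1)\bigr)P_{n-1}(x),\qquad n\ge 0,$$ and let $\partial_{\lambda,\eta}$ be the lowering operator: the linear operator on polynomials with $\partial_{\lambda,\eta}P_n=nP_{n-1}$ (so $\partial_{\lambda,\eta}P_0=0$), extended by continuity to $\mathcal E^1_{\min}(\mathbb R)$. Let $\nu_{\lambda,\eta}$ be the probability measure on $\mathbb R$ defined in the context. Then for every $f\in\mathcal E^1_{\min}(\mathbb R)$ and every $x\in\mathbb R$, $$(\partial_{\lambda,\eta}f)(x)=\int_{\mathbb R}\frac{f(x+s)-f(x)}{s}\,\nu_{\lambda,\eta}(ds),$$ where, when $\nu_{\lambda,\eta}$ charges $s=0$ (namely in the case $\lambda=\eta=0$, where $\nu_{0,0}=\delta_0$), the integrand at $s=0$ is understood as the limit $f'(x)$, so that $\partial_{0,0}f=f'$.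
   Context: $\mathcal E^1_{\min}(\mathbb C)$ denotes the entire functions $f$ of first order and minimal type, i.e. for every $\varepsilon>0$ there is $C>0$ with $|f(z)|\le Ce^{\varepsilon|z|}$ for all $z\in\mathbb C$; $\mathcal E^1_{\min}(\mathbb R)$ is the set of restrictions of such functions to $\mathbb R$. It carries the (nuclear Fréchet) topology given by the norms $N_q(f)=\sum_{n\ge0}|f_n|^2(n!)^2 2^{nq}$, $q\in\mathbb N$, where $f(z)=\sum_n f_nz^n$; polynomials are dense, and $\partial_{\lambda,\eta}$ is continuous on polynomials for this topology, hence extends uniquely to a continuous operator on $\mathcal E^1_{\min}(\mathbb R)$. The measure $\nu_{\lambda,\eta}$ is the probability measure of orthogonality of the monic polynomials $(Q_n)_{n\ge0}$ with $Q_{-1}=0$, $Q_0=1$, $xQ_n(x)=Q_{n+1}(x)+\lambda(n+1)Q_n(x)+\eta n(n+1)Q_{n-1}(x)$; in particular $\nu_{\lambda,0}=\delta_\lambda$ (so for $\eta=0$, $\lambda\neq0$ the formula reads $(\partial_{\lambda,0}f)(x)=(f(x+\lambda)-f(x))/\lambda$). *)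

theory Defs
  imports "HOL-Probability.Probability" "HOL-Complex_Analysis.Complex_Analysis"
    "HOL-Computational_Algebra.Polynomial"
begin

fun Ppoly :: "real \<Rightarrow> real \<Rightarrow> nat \<Rightarrow> complex poly" where
  "Ppoly lam eta 0 = 1"
| "Ppoly lam eta (Suc 0) = [:0, 1:]"
| "Ppoly lam eta (Suc (Suc n)) =
     [:- complex_of_real (lam * real (Suc n)), 1:] * Ppoly lam eta (Suc n)
     - smult (complex_of_real (real (Suc n) * (1 + eta * real n))) (Ppoly lam eta n)"

fun Qpoly :: "real \<Rightarrow> real \<Rightarrow> nat \<Rightarrow> real poly" where
  "Qpoly lam eta 0 = 1"
| "Qpoly lam eta (Suc 0) = [:- lam, 1:]"
| "Qpoly lam eta (Suc (Suc n)) =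
     [:- (lam * real (Suc (Suc n))), 1:] * Qpoly lam eta (Suc n)
     - smult (eta * real (Suc n) * real (Suc (Suc n))) (Qpoly lam eta n)"

definition orth_measure :: "real \<Rightarrow> real \<Rightarrow> real measure \<Rightarrow> bool" where
  "orth_measure lam eta M \<longleftrightarrow>
     prob_space M \<and> sets M = sets borel \<and>
     (\<forall>n. integrable M (\<lambda>x. x ^ n)) \<and>
     (\<forall>m n. (\<integral>x. poly (Qpoly lam eta m) x * poly (Qpoly lam eta n) x \<partial>M) =
        (if m = n then (\<Prod>k\<in>{1..n}. eta * real k * real (k + 1)) else 0))"

text \<open>Entire functions of first order and minimal type (an element of E^1_min(R)
  is identified with the unique entire function it is the restriction of).\<close>
definition Emin :: "(complex \<Rightarrow> complex) set" where
  "Emin = {F. F holomorphic_on UNIV \<and>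
     (\<forall>\<epsilon>>0. \<exists>C. \<forall>z. norm (F z) \<le> C * exp (\<epsilon> * norm z))}"

definition Nnorm :: "nat \<Rightarrow> (complex \<Rightarrow> complex) \<Rightarrow> real" where
  "Nnorm q F = (\<Sum>n. (norm ((deriv ^^ n) F 0 / of_nat (fact n)))\<^sup>2
                       * (fact n)\<^sup>2 * 2 ^ (n * q))"

definition lowering_ext :: "real \<Rightarrow> real \<Rightarrow> ((complex \<Rightarrow> complex) \<Rightarrow> (complex \<Rightarrow> complex)) \<Rightarrow> bool" where
  "lowering_ext lam eta D \<longleftrightarrow>
     (\<forall>F\<in>Emin. D F \<in> Emin) \<and>
     (\<forall>F\<in>Emin. \<forall>G\<in>Emin. \<forall>a b. D (\<lambda>z. a * F z + b * G z) = (\<lambda>z. a * D F z + b * D G z)) \<and>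
     (\<forall>n. D (\<lambda>z. poly (Ppoly lam eta n) z) = (\<lambda>z. of_nat n * poly (Ppoly lam eta (n - 1)) z)) \<and>
     (\<forall>Fs F. (\<forall>k. Fs k \<in> Emin) \<longrightarrow> F \<in> Emin \<longrightarrow>
        (\<forall>q. (\<lambda>k. Nnorm q (\<lambda>z. Fs k z - F z)) \<longlonglongrightarrow> 0) \<longrightarrow>
        (\<forall>q. (\<lambda>k. Nnorm q (\<lambda>z. D (Fs k) z - D F z)) \<longlonglongrightarrow> 0))"

end

theory Submission
  imports Defs
begin

text \<open>The monic polynomials \<open>P\<^sub>n\<close> are of binomial type with respect to a second family:
  \<open>P\<^sub>n(z + w) = \<Sum>\<^sub>k (n choose k) P\<^sub>n\<^sub>-\<^sub>k(z) R\<^sub>k(w)\<close>, where \<open>R\<^sub>0 = 1\<close> and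
  \<open>R\<^sub>k(w) = w Q\<^sub>k\<^sub>-\<^sub>1(w)\<close>; both sides satisfy the same three-term recurrence in \<open>n\<close>.
  Hence \<open>(P\<^sub>n(x + s) - P\<^sub>n(x)) / s = \<Sum>\<^sub>k (n choose k+1) P\<^sub>n\<^sub>-\<^sub>1\<^sub>-\<^sub>k(x) Q\<^sub>k(s)\<close>, and
  integration against \<open>\<nu>\<close>, which annihilates every \<open>Q\<^sub>k\<close> with \<open>k \<ge> 1\<close>, leaves \<open>n P\<^sub>n\<^sub>-\<^sub>1(x)\<close>.
  By linearity the formula holds for every polynomial.

  A general \<open>f\<close> is the limit of its Taylor polynomials in every norm \<open>N\<^sub>q\<close>, so the left-hand
  side converges by continuity of the lowering operator. On the right-hand side, the Cauchy
  estimates bound the difference quotients of all Taylor polynomials by \<open>C e\<^bsup>\<rho>|x|\<^esup> e\<^bsup>\<rho>|s|\<^esup>\<close>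
  for arbitrarily small \<open>\<rho> > 0\<close>, while the recurrence of the \<open>Q\<^sub>n\<close> shows that the moments of \<open>\<nu>\<close>
  grow at most like \<open>c\<^sup>n n!\<close>, so that \<open>e\<^bsup>\<rho>|s|\<^esup>\<close> is \<open>\<nu>\<close>-integrable for small \<open>\<rho>\<close>.
  Dominated convergence finishes the proof.\<close>

section \<open>Binomial convolutions\<close>

definition binomial_convolution :: "(nat \<Rightarrow> 'a::comm_ring_1) \<Rightarrow> (nat \<Rightarrow> 'a) \<Rightarrow> nat \<Rightarrow> 'a" where
  "binomial_convolution a b m = (\<Sum>k\<le>m. of_nat (m choose k) * a (m - k) * b k)"

lemma binomial_convolution_Suc:
  "binomial_convolution a b (Suc m) =
     (\<Sum>k\<le>m. of_nat (m choose k) * (a (Suc m - k) * b k + a (m - k) * b (Suc k)))"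
proof -
  have "a (Suc m) * b 0 + (\<Sum>k\<le>m. of_nat (m choose Suc k) * a (m - k) * b (Suc k))
      = (\<Sum>k\<le>Suc m. of_nat (m choose k) * a (Suc m - k) * b k)"
    by (subst sum.atMost_Suc_shift) simp
  then have shift: "a (Suc m) * b 0 + (\<Sum>k\<le>m. of_nat (m choose Suc k) * a (m - k) * b (Suc k))
      = (\<Sum>k\<le>m. of_nat (m choose k) * a (Suc m - k) * b k)"
    by (simp add: binomial_eq_0)
  have "binomial_convolution a b (Suc m) =
      a (Suc m) * b 0 + (\<Sum>k\<le>m. of_nat (Suc m choose Suc k) * a (m - k) * b (Suc k))"
    unfolding binomial_convolution_def by (subst sum.atMost_Suc_shift) simp
  also have "\<dots> = (a (Suc m) * b 0 + (\<Sum>k\<le>m. of_nat (m choose Suc k) * a (m - k) * b (Suc k)))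
      + (\<Sum>k\<le>m. of_nat (m choose k) * a (m - k) * b (Suc k))"
    by (simp add: sum.distrib algebra_simps)
  finally show ?thesis
    unfolding shift by (simp add: sum.distrib algebra_simps)
qed

lemma sum_binomial_absorb_diff:
  fixes g :: "nat \<Rightarrow> 'a::comm_ring_1"
  shows "(\<Sum>k\<le>Suc n. of_nat (Suc n choose k) * of_nat (Suc n - k) * g k)
    = of_nat (Suc n) * (\<Sum>k\<le>n. of_nat (n choose k) * g k)"
proof -
  have "of_nat (Suc n choose k) * of_nat (Suc n - k) * g k = of_nat (Suc n) * (of_nat (n choose k) * g k)"
    for k
    using binomial_absorb_comp[of "Suc n" k] by (metis of_nat_mult mult.commute mult.assoc diff_Suc_1)
  then have "(\<Sum>k\<le>n. of_nat (Suc n choose k) * of_nat (Suc n - k) * g k)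
      = of_nat (Suc n) * (\<Sum>k\<le>n. of_nat (n choose k) * g k)"
    by (simp only: sum_distrib_left)
  then show ?thesis
    by simp
qed

lemma sum_binomial_absorb:
  fixes h :: "nat \<Rightarrow> nat \<Rightarrow> 'a::comm_ring_1"
  shows "(\<Sum>k\<le>Suc n. of_nat (Suc n choose k) * of_nat k * h (Suc n - k) (k - 1))
    = of_nat (Suc n) * (\<Sum>k\<le>n. of_nat (n choose k) * h (n - k) k)"
proof -
  have "of_nat (Suc n choose Suc k) * (of_nat (Suc k) :: 'a) = of_nat (Suc n) * of_nat (n choose k)" for k
    using Suc_times_binomial[of k n] by (metis of_nat_mult mult.commute)
  then show ?thesis
    by (subst sum.atMost_Suc_shift) (simp add: sum_distrib_left mult.assoc del: of_nat_Suc)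
qed

lemma binomial_convolution_recurrence:
  fixes z s l e :: "'a::comm_ring_1"
  assumes a: "\<And>j. z * a j = a (Suc j) + l * of_nat j * a j + of_nat j * (1 + e * of_nat (j - 1)) * a (j - 1)"
    and b: "\<And>k. s * b k = b (Suc k) + l * of_nat k * b k + e * of_nat k * of_nat (k - 1) * b (k - 1)"
  shows "binomial_convolution a b (Suc (Suc n)) = (z + s - l * of_nat (Suc n)) * binomial_convolution a b (Suc n)
      - of_nat (Suc n) * (1 + e * of_nat n) * binomial_convolution a b n"
proof -
  let ?m = "Suc n"
  have summand: "(z + s - l * of_nat ?m) * (of_nat (?m choose k) * a (?m - k) * b k)
      = of_nat (?m choose k) * (a (Suc ?m - k) * b k + a (?m - k) * b (Suc k))
        + of_nat (?m choose k) * of_nat (?m - k) * ((1 + e * of_nat (n - k)) * a (n - k) * b k)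
        + of_nat (?m choose k) * of_nat k * (e * of_nat (k - 1) * a (?m - k) * b (k - 1))"
    if k: "k \<le> ?m" for k
  proof -
    have za: "z * a (?m - k) = a (Suc ?m - k) + l * of_nat (?m - k) * a (?m - k)
        + of_nat (?m - k) * (1 + e * of_nat (n - k)) * a (n - k)"
      using a[of "?m - k"] k by (simp add: Suc_diff_le)
    have "(z + s - l * of_nat ?m) * (of_nat (?m choose k) * a (?m - k) * b k)
        = of_nat (?m choose k) * ((z * a (?m - k)) * b k + a (?m - k) * (s * b k)
            - l * of_nat ?m * a (?m - k) * b k)"
      by (simp add: algebra_simps)
    then show ?thesis
      unfolding za b using k by (simp add: of_nat_diff algebra_simps)
  qed
  have "(z + s - l * of_nat ?m) * binomial_convolution a b ?m
      = (\<Sum>k\<le>?m. of_nat (?m choose k) * (a (Suc ?m - k) * b k + a (?m - k) * b (Suc k)))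
        + (\<Sum>k\<le>?m. of_nat (?m choose k) * of_nat (?m - k) * ((1 + e * of_nat (n - k)) * a (n - k) * b k))
        + (\<Sum>k\<le>?m. of_nat (?m choose k) * of_nat k * (e * of_nat (k - 1) * a (?m - k) * b (k - 1)))"
    unfolding binomial_convolution_def sum_distrib_left sum.distrib[symmetric]
    by (rule sum.cong[OF refl], rule summand) simp
  also have "\<dots> = binomial_convolution a b (Suc ?m)
        + of_nat ?m * (\<Sum>k\<le>n. of_nat (n choose k) * ((1 + e * of_nat (n - k)) * a (n - k) * b k))
        + of_nat ?m * (\<Sum>k\<le>n. of_nat (n choose k) * (e * of_nat k * a (n - k) * b k))"
    unfolding binomial_convolution_Suc sum_binomial_absorb_diff
      sum_binomial_absorb[where h = "\<lambda>i j. e * of_nat j * a i * b j"] ..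
  also have "\<dots> = binomial_convolution a b (Suc ?m) + of_nat ?m * (1 + e * of_nat n) * binomial_convolution a b n"
  proof -
    have sums: "(\<Sum>k\<le>n. of_nat (n choose k) * ((1 + e * of_nat (n - k)) * a (n - k) * b k))
        + (\<Sum>k\<le>n. of_nat (n choose k) * (e * of_nat k * a (n - k) * b k))
        = (1 + e * of_nat n) * binomial_convolution a b n"
      unfolding binomial_convolution_def sum.distrib[symmetric] sum_distrib_left
      by (rule sum.cong[OF refl]) (auto simp: algebra_simps)
    then show ?thesis
      by (subst add.assoc, subst distrib_left[symmetric]) (simp only: sums mult.assoc)
  qed
  finally show ?thesis
    by (simp add: algebra_simps)
qed

section \<open>Translates of the polynomials P_n\<close>

fun Qcomplex :: "real \<Rightarrow> real \<Rightarrow> nat \<Rightarrow> complex \<Rightarrow> complex" where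
  "Qcomplex l e 0 w = 1"
| "Qcomplex l e (Suc 0) w = w - of_real l"
| "Qcomplex l e (Suc (Suc n)) w = (w - of_real (l * real (Suc (Suc n)))) * Qcomplex l e (Suc n) w
     - of_real (e * real (Suc n) * real (Suc (Suc n))) * Qcomplex l e n w"

lemma Qcomplex_of_real: "Qcomplex l e k (of_real s) = of_real (poly (Qpoly l e k) s)"
  by (induction l e k "of_real s :: complex" rule: Qcomplex.induct) (simp_all add: algebra_simps)

lemma isCont_Qcomplex: "isCont (Qcomplex l e k) w"
  by (induction l e k w rule: Qcomplex.induct) (auto intro!: continuous_intros)

lemma Qcomplex_recurrence:
  "w * Qcomplex l e j w = Qcomplex l e (Suc j) w + of_real l * of_nat (Suc j) * Qcomplex l e j w
     + of_real e * of_nat j * of_nat (Suc j) * Qcomplex l e (j - 1) w"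
  by (cases j) (simp_all add: algebra_simps)

definition Rcomplex :: "real \<Rightarrow> real \<Rightarrow> nat \<Rightarrow> complex \<Rightarrow> complex" where
  "Rcomplex l e k w = (if k = 0 then 1 else w * Qcomplex l e (k - 1) w)"

lemma Rcomplex_recurrence:
  "w * Rcomplex l e k w = Rcomplex l e (Suc k) w + of_real l * of_nat k * Rcomplex l e k w
     + of_real e * of_nat k * of_nat (k - 1) * Rcomplex l e (k - 1) w"
proof (cases k)
  case (Suc j)
  then show ?thesis
    using Qcomplex_recurrence[of w l e j] by (cases j) (simp_all add: Rcomplex_def algebra_simps)
qed (simp add: Rcomplex_def)

lemma Ppoly_recurrence:
  "z * poly (Ppoly l e j) z = poly (Ppoly l e (Suc j)) z + of_real l * of_nat j * poly (Ppoly l e j) z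
     + of_nat j * (1 + of_real e * of_nat (j - 1)) * poly (Ppoly l e (j - 1)) z"
  by (cases j) (simp_all add: algebra_simps)

lemma Ppoly_add:
  "poly (Ppoly l e n) (z + w) =
     binomial_convolution (\<lambda>j. poly (Ppoly l e j) z) (\<lambda>k. Rcomplex l e k w) n"
proof -
  let ?c = "binomial_convolution (\<lambda>j. poly (Ppoly l e j) z) (\<lambda>k. Rcomplex l e k w)"
  have "poly (Ppoly l e n) (z + w) = ?c n \<and> poly (Ppoly l e (Suc n)) (z + w) = ?c (Suc n)"
  proof (induction n)
    case 0
    show ?case by (simp add: binomial_convolution_def Rcomplex_def)
  next
    case (Suc n)
    have "poly (Ppoly l e (Suc (Suc n))) (z + w) = (z + w - of_real l * of_nat (Suc n)) * poly (Ppoly l e (Suc n)) (z + w)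
        - of_nat (Suc n) * (1 + of_real e * of_nat n) * poly (Ppoly l e n) (z + w)"
      by (simp add: algebra_simps)
    moreover have "?c (Suc (Suc n)) = (z + w - of_real l * of_nat (Suc n)) * ?c (Suc n)
        - of_nat (Suc n) * (1 + of_real e * of_nat n) * ?c n"
      by (rule binomial_convolution_recurrence[OF Ppoly_recurrence Rcomplex_recurrence])
    ultimately show ?case
      using Suc by simp
  qed
  then show ?thesis by simp
qed

lemma Ppoly_difference_quotient:
  assumes "w \<noteq> 0"
  shows "(poly (Ppoly l e n) (z + w) - poly (Ppoly l e n) z) / w
    = (\<Sum>k<n. of_nat (n choose Suc k) * poly (Ppoly l e (n - Suc k)) z * Qcomplex l e k w)"
proof -
  have "binomial_convolution a b n = a n * b 0 + (\<Sum>k<n. of_nat (n choose Suc k) * a (n - Suc k) * b (Suc k))"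
    for a b :: "nat \<Rightarrow> complex"
    by (cases n) (simp_all add: binomial_convolution_def atMost_Suc_eq_insert_0 sum.reindex lessThan_Suc_atMost)
  then show ?thesis
    using assms unfolding Ppoly_add by (simp add: Rcomplex_def sum_divide_distrib mult.assoc)
qed

lemma Ppoly_monic: "degree (Ppoly l e n) \<le> n \<and> coeff (Ppoly l e n) n = 1"
proof (induction l e n rule: Ppoly.induct)
  case (3 l e n)
  then show ?case
    by (auto simp: mult_pCons_left coeff_eq_0 intro!: degree_diff_le degree_add_le
        order.trans[OF degree_smult_le])
qed (auto simp: degree_pCons_le)

section \<open>Entire functions of first order and minimal type\<close>

lemma power_div_fact_le_exp:
  fixes x :: real
  assumes "x \<ge> 0"
  shows "x ^ n / fact n \<le> exp x"
proof -
  have "(\<lambda>n. x ^ n / fact n) sums exp x"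
    using exp_converges[of x] by (simp add: divide_inverse_commute)
  then show ?thesis
    using sum_le_suminf[of "\<lambda>n. x ^ n / fact n" "{n}"] assms by (simp add: sums_iff)
qed

lemma Emin_holomorphic: "F \<in> Emin \<Longrightarrow> F holomorphic_on UNIV"
  unfolding Emin_def by auto

lemma Emin_field_differentiable: "F \<in> Emin \<Longrightarrow> F field_differentiable (at z)"
  using Emin_holomorphic holomorphic_on_imp_differentiable_at by blast

lemma Emin_poly: "poly p \<in> Emin"
proof -
  have "\<exists>C. \<forall>z. norm (poly p z) \<le> C * exp (\<epsilon> * norm z)" if "\<epsilon> > 0" for \<epsilon>
  proof (intro exI allI)
    fix z :: complex
    have pow: "norm z ^ i \<le> fact i / \<epsilon> ^ i * exp (\<epsilon> * norm z)" for i
      using power_div_fact_le_exp[of "\<epsilon> * norm z" i] \<open>\<epsilon> > 0\<close>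
      by (simp add: power_mult_distrib field_simps)
    have "norm (poly p z) \<le> (\<Sum>i\<le>degree p. norm (coeff p i) * norm z ^ i)"
      unfolding poly_altdef by (rule order.trans[OF norm_sum]) (simp add: norm_mult norm_power)
    also have "\<dots> \<le> (\<Sum>i\<le>degree p. norm (coeff p i) * (fact i / \<epsilon> ^ i * exp (\<epsilon> * norm z)))"
      by (intro sum_mono mult_left_mono pow) simp
    finally show "norm (poly p z) \<le> (\<Sum>i\<le>degree p. norm (coeff p i) * fact i / \<epsilon> ^ i) * exp (\<epsilon> * norm z)"
      by (simp add: sum_distrib_right mult.assoc)
  qed
  moreover have "poly p holomorphic_on UNIV"
    by (intro holomorphic_intros)
  ultimately show ?thesis
    unfolding Emin_def by simp
qed

lemma Emin_linear_combination:
  assumes "F \<in> Emin" "G \<in> Emin"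
  shows "(\<lambda>z. a * F z + b * G z) \<in> Emin"
proof -
  have "\<exists>C. \<forall>z. norm (a * F z + b * G z) \<le> C * exp (\<epsilon> * norm z)" if "\<epsilon> > 0" for \<epsilon>
  proof -
    obtain C1 where C1: "\<And>z. norm (F z) \<le> C1 * exp (\<epsilon> * norm z)"
      using assms(1) \<open>\<epsilon> > 0\<close> unfolding Emin_def by blast
    obtain C2 where C2: "\<And>z. norm (G z) \<le> C2 * exp (\<epsilon> * norm z)"
      using assms(2) \<open>\<epsilon> > 0\<close> unfolding Emin_def by blast
    have "norm (a * F z + b * G z) \<le> (norm a * C1 + norm b * C2) * exp (\<epsilon> * norm z)" for z
    proof -
      have "norm (a * F z + b * G z) \<le> norm a * norm (F z) + norm b * norm (G z)"
        by (metis norm_mult norm_triangle_ineq)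
      also have "\<dots> \<le> norm a * (C1 * exp (\<epsilon> * norm z)) + norm b * (C2 * exp (\<epsilon> * norm z))"
        by (intro add_mono mult_left_mono C1 C2) auto
      finally show ?thesis
        by (simp add: algebra_simps)
    qed
    then show ?thesis by blast
  qed
  moreover have "(\<lambda>z. a * F z + b * G z) holomorphic_on UNIV"
    using assms by (intro holomorphic_intros Emin_holomorphic)
  ultimately show ?thesis
    unfolding Emin_def by simp
qed

lemma Emin_diff: "F \<in> Emin \<Longrightarrow> G \<in> Emin \<Longrightarrow> (\<lambda>z. F z - G z) \<in> Emin"
  using Emin_linear_combination[of F G 1 "-1"] by simp

definition taylor_coeff :: "(complex \<Rightarrow> complex) \<Rightarrow> nat \<Rightarrow> complex" where
  "taylor_coeff F n = (deriv ^^ n) F 0 / of_nat (fact n)"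

lemma Nnorm_taylor_coeff: "Nnorm q F = (\<Sum>n. (norm (taylor_coeff F n))\<^sup>2 * (fact n)\<^sup>2 * 2 ^ (n * q))"
  unfolding Nnorm_def taylor_coeff_def ..

lemma sums_taylor_coeff:
  assumes "F holomorphic_on UNIV"
  shows "(\<lambda>n. taylor_coeff F n * z ^ n) sums F z"
proof -
  have "F holomorphic_on ball 0 (norm z + 1)" using assms holomorphic_on_subset by blast
  moreover have "z \<in> ball 0 (norm z + 1)" by simp
  ultimately show ?thesis using holomorphic_power_series[of F 0 "norm z + 1" z]
    by (simp add: taylor_coeff_def)
qed

lemma norm_higher_deriv_le_of_exp_bound:
  assumes hol: "F holomorphic_on UNIV" and "\<epsilon> > 0"
    and bound: "\<And>z. norm (F z) \<le> C * exp (\<epsilon> * norm z)"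
  shows "norm ((deriv ^^ n) F 0) \<le> C * (exp 1 * \<epsilon>) ^ n"
proof (cases "n = 0")
  case True
  then show ?thesis using bound[of 0] by simp
next
  case False
  define r where "r = real n / \<epsilon>"
  have "r > 0" using False \<open>\<epsilon> > 0\<close> by (simp add: r_def)
  have "norm ((deriv ^^ n) F 0) \<le> fact n * (C * exp (\<epsilon> * r)) / r ^ n"
  proof (rule Cauchy_inequality)
    show "F holomorphic_on ball 0 r" "continuous_on (cball 0 r) F"
      using hol holomorphic_on_subset holomorphic_on_imp_continuous_on continuous_on_subset by blast+
    show "norm (F z) \<le> C * exp (\<epsilon> * r)" if "norm (0 - z) = r" for z
      using bound[of z] that by simp
  qed (use \<open>r > 0\<close> in auto)
  also have "\<dots> = C * (exp 1 * \<epsilon>) ^ n * (fact n / real n ^ n)"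
    using \<open>\<epsilon> > 0\<close> False
    by (simp add: r_def power_divide power_mult_distrib exp_of_nat_mult[symmetric] field_simps)
  also have "\<dots> \<le> C * (exp 1 * \<epsilon>) ^ n"
  proof -
    have "norm (F 0) \<le> C" using bound[of 0] by simp
    then have "C \<ge> 0" by (meson norm_ge_zero order_trans)
    moreover have "fact n / real n ^ n \<le> 1" using fact_le_power[of n] False by simp
    ultimately show ?thesis
      using \<open>\<epsilon> > 0\<close> by (intro mult_left_le) simp_all
  qed
  finally show ?thesis .
qed

lemma Emin_taylor_coeff_bound:
  assumes F: "F \<in> Emin" and "\<rho> > 0"
  shows "\<exists>C\<ge>0. \<forall>n. norm (taylor_coeff F n) * fact n \<le> C * \<rho> ^ n"
proof -
  have "\<rho> / exp 1 > 0"
    using \<open>\<rho> > 0\<close> by simp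
  then obtain C where C: "\<And>z. norm (F z) \<le> C * exp (\<rho> / exp 1 * norm z)"
    using F unfolding Emin_def by blast
  have "norm (F 0) \<le> C"
    using C[of 0] by simp
  then have "C \<ge> 0"
    by (meson norm_ge_zero order_trans)
  moreover have "norm (taylor_coeff F n) * fact n \<le> C * \<rho> ^ n" for n
    using norm_higher_deriv_le_of_exp_bound[OF Emin_holomorphic[OF F] \<open>\<rho> / exp 1 > 0\<close> C, of n]
    by (simp add: taylor_coeff_def norm_divide)
  ultimately show ?thesis
    by blast
qed

lemma Emin_Nnorm_summable:
  assumes F: "F \<in> Emin"
  shows "summable (\<lambda>n. (norm (taylor_coeff F n))\<^sup>2 * (fact n)\<^sup>2 * 2 ^ (n * q))"
proof -
  define \<rho> :: real where "\<rho> = (1/2) ^ (q + 1)"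
  have \<rho>: "\<rho> > 0" by (simp add: \<rho>_def)
  obtain C where C0: "C \<ge> 0" and C: "\<And>n. norm (taylor_coeff F n) * fact n \<le> C * \<rho> ^ n"
    using Emin_taylor_coeff_bound[OF F \<rho>] by blast
  have four: "(2::real) ^ (q * 2) = 4 ^ q" using power_mult[of "2::real" 2 q] by (simp add: mult.commute)
  have rho_square: "\<rho>\<^sup>2 * 2 ^ q = (1/2) ^ (q + 2)"
    by (simp add: four \<rho>_def power_mult_distrib[symmetric] power_add[symmetric] power_mult[symmetric] field_simps)
  have term_bound: "(norm (taylor_coeff F n))\<^sup>2 * (fact n)\<^sup>2 * 2 ^ (n * q) \<le> C\<^sup>2 * ((1/2) ^ (q + 2)) ^ n" for n
  proof -
    have "(norm (taylor_coeff F n))\<^sup>2 * (fact n)\<^sup>2 * 2 ^ (n * q) = (norm (taylor_coeff F n) * fact n)\<^sup>2 * 2 ^ (n * q)"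
      by (simp add: power_mult_distrib)
    also have "\<dots> \<le> (C * \<rho> ^ n)\<^sup>2 * 2 ^ (n * q)"
      using C[of n] by (intro mult_right_mono power_mono) auto
    also have "\<dots> = C\<^sup>2 * (\<rho>\<^sup>2 * 2 ^ q) ^ n"
      by (simp add: power_mult_distrib power_mult[symmetric] mult.commute)
    finally show ?thesis unfolding rho_square .
  qed
  show ?thesis
    by (rule summable_comparison_test'[OF summable_mult[OF summable_geometric], of _ 0])
       (use term_bound power_le_one[of "1/2::real" q] in auto)
qed

lemma norm_le_Nnorm_0:
  assumes G: "G \<in> Emin"
  shows "norm (G z) \<le> sqrt (Nnorm 0 G) * exp (norm z)"
proof -
  define a where "a n = (norm (taylor_coeff G n))\<^sup>2 * (fact n)\<^sup>2 * 2 ^ (n * 0)" for n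
  have sa: "summable a" unfolding a_def by (rule Emin_Nnorm_summable[OF G])
  have N: "Nnorm 0 G = suminf a" unfolding Nnorm_taylor_coeff a_def ..
  have an: "a n \<le> suminf a" for n
    using sum_le_suminf[OF sa, of "{n}"] by (simp add: a_def)
  have cb: "norm (taylor_coeff G n) * fact n \<le> sqrt (Nnorm 0 G)" for n
    using an[of n] unfolding N by (intro real_le_rsqrt) (simp add: a_def power_mult_distrib)
  have s1: "(\<lambda>n. taylor_coeff G n * z ^ n) sums G z" by (rule sums_taylor_coeff[OF Emin_holomorphic[OF G]])
  have s2: "(\<lambda>n. sqrt (Nnorm 0 G) * (norm z ^ n / fact n)) sums (sqrt (Nnorm 0 G) * exp (norm z))"
    using sums_mult[OF exp_converges[of "norm z"]] by (simp add: divide_inverse_commute)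
  show ?thesis
  proof (rule norm_sums_le[OF s1 s2])
    fix n
    have "norm (taylor_coeff G n) \<le> sqrt (Nnorm 0 G) / fact n" using cb[of n] by (simp add: field_simps)
    then have "norm (taylor_coeff G n) * norm z ^ n \<le> sqrt (Nnorm 0 G) / fact n * norm z ^ n"
      by (intro mult_right_mono) auto
    then show "norm (taylor_coeff G n * z ^ n) \<le> sqrt (Nnorm 0 G) * (norm z ^ n / fact n)"
      by (simp add: norm_mult norm_power)
  qed
qed

lemma higher_deriv_poly: "(deriv ^^ n) (poly p) = poly ((pderiv ^^ n) (p :: complex poly))"
proof (induction n)
  case 0 then show ?case by simp
next
  case (Suc n)
  have dp: "deriv (poly q) = poly (pderiv q)" for q :: "complex poly"
    by (rule ext) (rule DERIV_imp_deriv[OF poly_DERIV])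
  show ?case by (simp only: funpow.simps(2) o_apply Suc.IH dp)
qed

lemma taylor_coeff_poly: "taylor_coeff (poly p) n = coeff (p :: complex poly) n"
proof -
  have "(deriv ^^ n) (poly p) 0 = fact n * coeff p n"
    by (simp add: higher_deriv_poly poly_0_coeff_0 coeff_higher_pderiv pochhammer_fact)
  then show ?thesis by (simp add: taylor_coeff_def)
qed

definition taylor_poly :: "(complex \<Rightarrow> complex) \<Rightarrow> nat \<Rightarrow> complex poly" where
  "taylor_poly F N = (\<Sum>n<N. monom (taylor_coeff F n) n)"

lemma coeff_taylor_poly: "coeff (taylor_poly F N) n = (if n < N then taylor_coeff F n else 0)"
  by (simp add: taylor_poly_def coeff_sum coeff_monom)

lemma poly_taylor_poly: "poly (taylor_poly F N) w = (\<Sum>n<N. taylor_coeff F n * w ^ n)"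
  by (simp add: taylor_poly_def poly_sum poly_monom)

lemma taylor_coeff_taylor_poly_diff:
  assumes "F \<in> Emin"
  shows "taylor_coeff (\<lambda>z. poly (taylor_poly F N) z - F z) n = (if n < N then 0 else - taylor_coeff F n)"
proof -
  have "(deriv ^^ n) (\<lambda>z. poly (taylor_poly F N) z - F z) 0 = (deriv ^^ n) (poly (taylor_poly F N)) 0 - (deriv ^^ n) F 0"
  proof -
    have h: "(\<lambda>z. poly (taylor_poly F N) z) holomorphic_on UNIV" by (intro holomorphic_intros)
    show ?thesis using higher_deriv_diff[OF h Emin_holomorphic[OF assms], of 0 n] by simp
  qed
  then have "taylor_coeff (\<lambda>z. poly (taylor_poly F N) z - F z) n = taylor_coeff (poly (taylor_poly F N)) n - taylor_coeff F n"
    by (simp add: taylor_coeff_def diff_divide_distrib)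
  then show ?thesis by (simp add: taylor_coeff_poly coeff_taylor_poly)
qed

lemma Nnorm_taylor_poly_diff_tendsto:
  assumes F: "F \<in> Emin"
  shows "(\<lambda>N. Nnorm q (\<lambda>z. poly (taylor_poly F N) z - F z)) \<longlonglongrightarrow> 0"
proof -
  define a where "a n = (norm (taylor_coeff F n))\<^sup>2 * (fact n)\<^sup>2 * 2 ^ (n * q)" for n
  have sa: "summable a" unfolding a_def by (rule Emin_Nnorm_summable[OF F])
  have e: "Nnorm q (\<lambda>z. poly (taylor_poly F N) z - F z) = suminf a - (\<Sum>n<N. a n)" for N
  proof -
    have "(\<lambda>n. a n - (if n \<in> {..<N} then a n else 0)) sums (suminf a - (\<Sum>n\<in>{..<N}. a n))"
      by (intro sums_diff summable_sums[OF sa] sums_If_finite_set) simp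
    moreover have "(\<lambda>n. a n - (if n \<in> {..<N} then a n else 0)) =
        (\<lambda>n. (norm (taylor_coeff (\<lambda>z. poly (taylor_poly F N) z - F z) n))\<^sup>2 * (fact n)\<^sup>2 * 2 ^ (n * q))"
      by (auto simp: taylor_coeff_taylor_poly_diff[OF F] a_def fun_eq_iff)
    ultimately show ?thesis unfolding Nnorm_taylor_coeff by (simp add: sums_iff)
  qed
  have "(\<lambda>N. suminf a - (\<Sum>n<N. a n)) \<longlonglongrightarrow> suminf a - suminf a"
    by (intro tendsto_diff tendsto_const summable_LIMSEQ[OF sa])
  then show ?thesis unfolding e by simp
qed

lemma sums_deriv_taylor_coeff:
  assumes G: "G holomorphic_on UNIV"
  shows "(\<lambda>n. of_nat (Suc n) * taylor_coeff G (Suc n) * w ^ n) sums deriv G w"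
proof -
  have "deriv G holomorphic_on UNIV" using G by (intro holomorphic_deriv) auto
  then have s: "(\<lambda>n. taylor_coeff (deriv G) n * w ^ n) sums deriv G w" by (rule sums_taylor_coeff)
  have "taylor_coeff (deriv G) n = of_nat (Suc n) * taylor_coeff G (Suc n)" for n
  proof -
    have fp: "(deriv ^^ Suc n) G = (deriv ^^ n) (deriv G)" by (simp only: funpow_Suc_right o_apply)
    have a: "taylor_coeff G (Suc n) = (deriv ^^ n) (deriv G) 0 / (of_nat (Suc n) * fact n)"
      unfolding taylor_coeff_def fp of_nat_fact unfolding fact_Suc ..
    have b: "taylor_coeff (deriv G) n = (deriv ^^ n) (deriv G) 0 / fact n"
      unfolding taylor_coeff_def by (simp add: of_nat_fact)
    have nz: "(of_nat (Suc n) :: complex) \<noteq> 0" by (simp del: of_nat_Suc)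
    show ?thesis unfolding a b times_divide_eq_right nonzero_mult_divide_mult_cancel_left[OF nz] ..
  qed
  then show ?thesis using s by simp
qed

lemma norm_deriv_le_of_taylor_coeff_bound:
  assumes G: "G holomorphic_on UNIV" and C0: "C \<ge> 0" and \<rho>: "\<rho> > 0"
    and cb: "\<And>n. norm (taylor_coeff G n) * fact n \<le> C * \<rho> ^ n"
  shows "norm (deriv G w) \<le> C * \<rho> * exp (\<rho> * norm w)"
proof -
  have s2: "(\<lambda>n. C * \<rho> * ((\<rho> * norm w) ^ n / fact n)) sums (C * \<rho> * exp (\<rho> * norm w))"
    using sums_mult[OF exp_converges[of "\<rho> * norm w"]] by (simp add: divide_inverse_commute)
  show ?thesis
  proof (rule norm_sums_le[OF sums_deriv_taylor_coeff[OF G] s2])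
    fix n
    have f: "fact (Suc n) = real (Suc n) * (fact n :: real)" by (simp only: fact_Suc)
    have "norm (of_nat (Suc n) * taylor_coeff G (Suc n) * w ^ n) = real (Suc n) * norm (taylor_coeff G (Suc n)) * norm w ^ n"
      by (simp only: norm_mult norm_power norm_of_nat)
    also have "\<dots> = (norm (taylor_coeff G (Suc n)) * fact (Suc n)) * norm w ^ n / fact n"
      unfolding f by (simp add: field_simps del: of_nat_Suc)
    also have "\<dots> \<le> (C * \<rho> ^ Suc n) * norm w ^ n / fact n"
      by (intro divide_right_mono mult_right_mono cb) auto
    also have "\<dots> = C * \<rho> * ((\<rho> * norm w) ^ n / fact n)" by (simp add: power_mult_distrib)
    finally show "norm (of_nat (Suc n) * taylor_coeff G (Suc n) * w ^ n) \<le> C * \<rho> * ((\<rho> * norm w) ^ n / fact n)" .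
  qed
qed

section \<open>Difference quotients and the formula for polynomials\<close>

definition difference_quotient :: "(complex \<Rightarrow> complex) \<Rightarrow> real \<Rightarrow> real \<Rightarrow> complex" where
  "difference_quotient F x s =
     (if s = 0 then deriv F (of_real x) else (F (of_real (x + s)) - F (of_real x)) / of_real s)"

lemma has_field_derivative_of_difference_quotient:
  fixes F G :: "complex \<Rightarrow> complex"
  assumes "isCont G 0" and "\<And>w. w \<noteq> 0 \<Longrightarrow> (F (z + w) - F z) / w = G w"
  shows "(F has_field_derivative G 0) (at z)"
proof -
  have "\<forall>\<^sub>F w in at 0. G w = (F (z + w) - F z) / w"
    using assms(2) by (auto simp: eventually_at_filter)
  then have "((\<lambda>w. (F (z + w) - F z) / w) \<longlongrightarrow> G 0) (at 0)"
    by (rule Lim_transform_eventually[OF assms(1)[unfolded isCont_def]])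
  then show ?thesis
    by (simp add: DERIV_def)
qed

lemma difference_quotient_Ppoly:
  "difference_quotient (poly (Ppoly l e n)) x s =
    (\<Sum>k<n. of_nat (n choose Suc k) * poly (Ppoly l e (n - Suc k)) (of_real x) * of_real (poly (Qpoly l e k) s))"
proof (cases "s = 0")
  case True
  let ?G = "\<lambda>w. \<Sum>k<n. of_nat (n choose Suc k) * poly (Ppoly l e (n - Suc k)) (of_real x) * Qcomplex l e k w"
  have "isCont ?G 0"
    using isCont_Qcomplex by (intro continuous_intros) auto
  then have "(poly (Ppoly l e n) has_field_derivative ?G 0) (at (of_real x))"
    by (rule has_field_derivative_of_difference_quotient) (rule Ppoly_difference_quotient)
  then have "deriv (poly (Ppoly l e n)) (of_real x) = ?G 0"
    by (rule DERIV_imp_deriv)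
  then show ?thesis
    using True Qcomplex_of_real[of l e _ 0] by (simp add: difference_quotient_def)
next
  case False
  then show ?thesis
    using Ppoly_difference_quotient[of "of_real s" l e n "of_real x"]
    by (simp add: difference_quotient_def Qcomplex_of_real)
qed

lemma difference_quotient_linear_combination:
  assumes "F \<in> Emin" "G \<in> Emin"
  shows "difference_quotient (\<lambda>z. a * F z + b * G z) x s = a * difference_quotient F x s + b * difference_quotient G x s"
proof (cases "s = 0")
  case True
  have "deriv (\<lambda>z. a * F z + b * G z) (of_real x) = a * deriv F (of_real x) + b * deriv G (of_real x)"
    using Emin_field_differentiable[OF assms(1)] Emin_field_differentiable[OF assms(2)]
    by (subst deriv_add) (auto intro!: field_differentiable_mult simp: deriv_cmult)
  then show ?thesis
    using True by (simp add: difference_quotient_def)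
qed (simp add: difference_quotient_def field_simps)

lemma norm_difference_quotient_le:
  assumes G: "G holomorphic_on UNIV" and C0: "C \<ge> 0" and \<rho>: "\<rho> > 0"
    and cb: "\<And>n. norm (taylor_coeff G n) * fact n \<le> C * \<rho> ^ n"
  shows "norm (difference_quotient G x s) \<le> C * \<rho> * exp (\<rho> * \<bar>x\<bar>) * exp (\<rho> * \<bar>s\<bar>)"
proof (cases "s = 0")
  case True
  then show ?thesis using norm_deriv_le_of_taylor_coeff_bound[OF G C0 \<rho> cb, of "of_real x"] by (simp add: difference_quotient_def)
next
  case False
  define R where "R = \<bar>x\<bar> + \<bar>s\<bar>"
  have "norm (G (of_real (x + s)) - G (of_real x)) \<le> (C * \<rho> * exp (\<rho> * R)) * norm (of_real (x + s) - (of_real x :: complex))"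
  proof (rule field_differentiable_bound[where S = "cball 0 R" and f' = "deriv G"])
    show "convex (cball (0::complex) R)" by simp
    show "(G has_field_derivative deriv G z) (at z within cball 0 R)" for z
      using G by (intro holomorphic_derivI) auto
    show "norm (deriv G z) \<le> C * \<rho> * exp (\<rho> * R)" if "z \<in> cball 0 R" for z
    proof -
      have "norm (deriv G z) \<le> C * \<rho> * exp (\<rho> * norm z)" by (rule norm_deriv_le_of_taylor_coeff_bound[OF G C0 \<rho> cb])
      also have "\<dots> \<le> C * \<rho> * exp (\<rho> * R)" using that C0 \<rho> by (intro mult_left_mono) auto
      finally show ?thesis .
    qed
    show "of_real (x + s) \<in> cball (0::complex) R"
      using abs_triangle_ineq[of x s] by (simp add: R_def del: of_real_add)
    show "of_real x \<in> cball (0::complex) R" by (simp add: R_def)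
  qed
  moreover have "norm (of_real (x + s) - (of_real x :: complex)) = \<bar>s\<bar>"
    by (metis add_diff_cancel_left' norm_of_real of_real_diff)
  ultimately have "norm (G (of_real (x + s)) - G (of_real x)) \<le> C * \<rho> * exp (\<rho> * R) * \<bar>s\<bar>"
    by simp
  moreover have "norm (difference_quotient G x s) = norm (G (of_real (x + s)) - G (of_real x)) / \<bar>s\<bar>"
    using False by (simp add: difference_quotient_def norm_divide del: of_real_add)
  ultimately have "norm (difference_quotient G x s) \<le> C * \<rho> * exp (\<rho> * R)"
    using False by (simp add: divide_le_eq)
  also have "\<dots> = C * \<rho> * exp (\<rho> * \<bar>x\<bar>) * exp (\<rho> * \<bar>s\<bar>)"
    by (simp add: R_def distrib_left exp_add)
  finally show ?thesis .
qed

lemma difference_quotient_measurable: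
  assumes G: "G \<in> Emin" and sM: "sets M = sets borel"
  shows "difference_quotient G x \<in> borel_measurable M"
proof -
  have c: "continuous_on UNIV G" using Emin_holomorphic[OF G] holomorphic_on_imp_continuous_on by blast
  have h1: "(\<lambda>s. G (of_real (x + s))) \<in> borel_measurable borel"
    by (intro borel_measurable_continuous_onI continuous_on_compose2[OF c] continuous_intros) auto
  have h2: "(\<lambda>s::real. (G (of_real (x + s)) - G (of_real x)) / of_real s) \<in> borel_measurable borel"
    using h1 by measurable
  have "{s \<in> space borel. s = (0::real)} \<in> sets borel" by simp
  then have "difference_quotient G x \<in> borel_measurable borel"
    unfolding difference_quotient_def[abs_def] by (intro measurable_If h2) auto
  then show ?thesis using measurable_cong_sets[OF sM refl] by blast
qed

lemma difference_quotient_taylor_poly_tendsto: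
  assumes F: "F \<in> Emin"
  shows "(\<lambda>N. difference_quotient (poly (taylor_poly F N)) x s) \<longlonglongrightarrow> difference_quotient F x s"
proof (cases "s = 0")
  case False
  have l: "(\<lambda>N. poly (taylor_poly F N) w) \<longlonglongrightarrow> F w" for w
    using sums_taylor_coeff[OF Emin_holomorphic[OF F], of w] unfolding sums_def poly_taylor_poly .
  have ns: "(of_real s :: complex) \<noteq> 0" using False by simp
  show ?thesis using False unfolding difference_quotient_def
    by (simp del: of_real_add) (intro tendsto_intros l ns)
next
  case True
  define b where "b n = of_nat (Suc n) * taylor_coeff F (Suc n) * (of_real x) ^ n" for n
  have e: "deriv (poly (taylor_poly F N)) (of_real x) = (\<Sum>n\<in>{..<N - 1}. b n)" for N
  proof -
    have h: "(\<lambda>z. poly (taylor_poly F N) z) holomorphic_on UNIV" by (intro holomorphic_intros)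
    have "(\<lambda>n. of_nat (Suc n) * taylor_coeff (poly (taylor_poly F N)) (Suc n) * (of_real x) ^ n) sums deriv (poly (taylor_poly F N)) (of_real x)"
      using sums_deriv_taylor_coeff[OF h] by simp
    moreover have "(\<lambda>n. of_nat (Suc n) * taylor_coeff (poly (taylor_poly F N)) (Suc n) * (of_real x) ^ n)
        = (\<lambda>n. if n \<in> {..<N - 1} then b n else 0)"
      by (auto simp: fun_eq_iff taylor_coeff_poly coeff_taylor_poly b_def)
    ultimately show ?thesis using sums_If_finite_set[of "{..<N - 1}" b] sums_unique2 by fastforce
  qed
  have l: "(\<lambda>M. \<Sum>n<M. b n) \<longlonglongrightarrow> deriv F (of_real x)"
    using sums_deriv_taylor_coeff[OF Emin_holomorphic[OF F], of "of_real x"] unfolding sums_def b_def .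
  have "(\<lambda>N. \<Sum>n\<in>{..<N - 1}. b n) \<longlonglongrightarrow> deriv F (of_real x)"
    by (rule LIMSEQ_imp_Suc) (use l in simp)
  then show ?thesis using True unfolding difference_quotient_def e by simp
qed

lemma orth_measure_integrable_poly:
  assumes "orth_measure l e M"
  shows "integrable M (\<lambda>s. poly p s)"
proof -
  have "integrable M (\<lambda>s. \<Sum>i\<le>degree p. coeff p i * s ^ i)"
    using assms unfolding orth_measure_def by (intro Bochner_Integration.integrable_sum Bochner_Integration.integrable_mult_right) auto
  then show ?thesis
    by (simp add: poly_altdef)
qed

lemma orth_measure_integral_Qpoly:
  assumes "orth_measure l e M"
  shows "(\<integral>s. poly (Qpoly l e k) s \<partial>M) = (if k = 0 then 1 else 0)"
proof -
  have "(\<integral>s. poly (Qpoly l e 0) s * poly (Qpoly l e k) s \<partial>M) =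
      (if 0 = k then (\<Prod>j\<in>{1..k}. e * real j * real (j + 1)) else 0)"
    using assms unfolding orth_measure_def by blast
  then show ?thesis
    by auto
qed

lemma integral_difference_quotient_Ppoly:
  assumes "orth_measure l e M"
  shows "integrable M (difference_quotient (poly (Ppoly l e n)) x)"
    and "(\<integral>s. difference_quotient (poly (Ppoly l e n)) x s \<partial>M) = of_nat n * poly (Ppoly l e (n - 1)) (of_real x)"
proof -
  have Q: "integrable M (\<lambda>s. complex_of_real (poly (Qpoly l e k) s))" for k
    using orth_measure_integrable_poly[OF assms] by simp
  show "integrable M (difference_quotient (poly (Ppoly l e n)) x)"
    unfolding difference_quotient_Ppoly by (intro Bochner_Integration.integrable_sum Bochner_Integration.integrable_mult_right Q)
  have "(\<integral>s. difference_quotient (poly (Ppoly l e n)) x s \<partial>M) =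
      (\<Sum>k<n. of_nat (n choose Suc k) * poly (Ppoly l e (n - Suc k)) (of_real x) * of_real (if k = 0 then 1 else 0))"
    unfolding difference_quotient_Ppoly using Q
    by (subst Bochner_Integration.integral_sum) (auto simp: orth_measure_integral_Qpoly[OF assms])
  also have "\<dots> = (\<Sum>k<n. if k = 0 then of_nat n * poly (Ppoly l e (n - 1)) (of_real x) else 0)"
    by (rule sum.cong) auto
  also have "\<dots> = of_nat n * poly (Ppoly l e (n - 1)) (of_real x)"
    by (simp add: sum.delta)
  finally show "(\<integral>s. difference_quotient (poly (Ppoly l e n)) x s \<partial>M) = of_nat n * poly (Ppoly l e (n - 1)) (of_real x)" .
qed

definition lowering_integral_formula ::
    "real measure \<Rightarrow> ((complex \<Rightarrow> complex) \<Rightarrow> (complex \<Rightarrow> complex)) \<Rightarrow> real \<Rightarrow> (complex \<Rightarrow> complex) \<Rightarrow> bool"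
  where "lowering_integral_formula M D x F \<longleftrightarrow>
    integrable M (difference_quotient F x) \<and> D F (of_real x) = (\<integral>s. difference_quotient F x s \<partial>M)"

lemma lowering_integral_formula_linear_combination:
  assumes "lowering_ext l e D" "F \<in> Emin" "G \<in> Emin"
    and "lowering_integral_formula M D x F" "lowering_integral_formula M D x G"
  shows "lowering_integral_formula M D x (\<lambda>z. a * F z + b * G z)"
proof -
  have "D (\<lambda>z. a * F z + b * G z) = (\<lambda>z. a * D F z + b * D G z)"
    using assms(1-3) unfolding lowering_ext_def by blast
  moreover have "difference_quotient (\<lambda>z. a * F z + b * G z) x =
      (\<lambda>s. a * difference_quotient F x s + b * difference_quotient G x s)"
    using difference_quotient_linear_combination[OF assms(2,3)] by blast
  ultimately show ?thesis
    using assms(4,5) unfolding lowering_integral_formula_def by simp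
qed

lemma lowering_integral_formula_poly:
  assumes "orth_measure l e M" "lowering_ext l e D"
  shows "lowering_integral_formula M D x (poly p)"
proof (induction "degree p" arbitrary: p rule: less_induct)
  case less
  have P: "lowering_integral_formula M D x (poly (Ppoly l e n))" for n
    using integral_difference_quotient_Ppoly[OF assms(1)] assms(2)
    unfolding lowering_integral_formula_def lowering_ext_def by simp
  define d where "d = degree p"
  define r where "r = p - smult (lead_coeff p) (Ppoly l e d)"
  have r_coeff: "coeff r k = 0" if "k \<ge> d" for k
    using Ppoly_monic[of l e d] that coeff_eq_0[of p k] coeff_eq_0[of "Ppoly l e d" k]
    by (cases "k = d") (auto simp: r_def d_def)
  have "lowering_integral_formula M D x (poly r)"
  proof (cases "r = 0")
    case True
    have zero: "poly r = (\<lambda>z. 0 * poly (Ppoly l e 0) z + 0 * poly (Ppoly l e 0) z)"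
      using True by (simp add: fun_eq_iff)
    show ?thesis
      unfolding zero by (rule lowering_integral_formula_linear_combination[OF assms(2) Emin_poly Emin_poly P P])
  next
    case False
    then have "degree r < degree p"
      using r_coeff[of "degree r"] by (cases "degree r \<ge> d") (auto simp: d_def)
    then show ?thesis
      by (rule less)
  qed
  then have "lowering_integral_formula M D x (\<lambda>z. lead_coeff p * poly (Ppoly l e d) z + 1 * poly r z)"
    by (rule lowering_integral_formula_linear_combination[OF assms(2) Emin_poly Emin_poly P])
  moreover have "(\<lambda>z. lead_coeff p * poly (Ppoly l e d) z + 1 * poly r z) = poly p"
    by (simp add: r_def fun_eq_iff)
  ultimately show ?case
    by simp
qed

section \<open>Exponential moments of the orthogonality measure\<close>

lemma exp_abs_integrable_of_moment_bound:
  fixes M :: "real measure"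
  assumes sets: "sets M = sets borel" and moments: "\<And>n. integrable M (\<lambda>s. s ^ n)"
    and bound: "\<And>n. \<bar>\<integral>s. s ^ n \<partial>M\<bar> \<le> A * B ^ n * fact n" and "B > 0"
  shows "\<exists>\<rho>>0. integrable M (\<lambda>s. exp (\<rho> * \<bar>s\<bar>))"
proof -
  define \<rho> where "\<rho> = 1 / (2 * B)"
  have "\<rho> > 0" using \<open>B > 0\<close> by (simp add: \<rho>_def)
  define f where "f n s = (if even n then \<rho> ^ n / fact n else 0) * s ^ n" for n s
  have f_nonneg: "f n s \<ge> 0" for n s
    using \<open>\<rho> > 0\<close> by (simp add: f_def zero_le_even_power)
  have f_sums: "(\<lambda>n. f n s) sums cosh (\<rho> * s)" for s
  proof -
    have "(\<lambda>n. f n s) = (\<lambda>n. if even n then (\<rho> * s) ^ n /\<^sub>R fact n else 0)"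
      by (simp add: f_def fun_eq_iff power_mult_distrib divide_inverse_commute)
    then show ?thesis
      using cosh_converges[of "\<rho> * s"] by simp
  qed
  have f_integrable: "integrable M (f n)" for n
    unfolding f_def using moments by (rule integrable_mult_right)
  have f_integral: "\<bar>\<integral>s. f n s \<partial>M\<bar> \<le> A * (1 / 2) ^ n" for n
  proof -
    have "\<bar>\<integral>s. f n s \<partial>M\<bar> \<le> \<rho> ^ n / fact n * \<bar>\<integral>s. s ^ n \<partial>M\<bar>"
      using \<open>\<rho> > 0\<close> by (simp add: f_def abs_mult)
    also have "\<dots> \<le> \<rho> ^ n / fact n * (A * B ^ n * fact n)"
      using \<open>\<rho> > 0\<close> by (intro mult_left_mono bound) simp
    also have "\<dots> = A * (\<rho> * B) ^ n"
      by (simp add: power_mult_distrib)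
    finally show ?thesis
      using \<open>B > 0\<close> by (simp add: \<rho>_def)
  qed
  have "summable (\<lambda>n. \<integral>s. norm (f n s) \<partial>M)"
    using f_integral f_nonneg
    by (intro summable_comparison_test'[OF summable_mult[OF summable_geometric], of _ 0]) auto
  then have "integrable M (\<lambda>s. \<Sum>n. f n s)"
    using f_nonneg f_sums
    by (intro integrable_suminf f_integrable) (auto simp: sums_iff)
  then have "integrable M (\<lambda>s. 2 * cosh (\<rho> * s))"
    using f_sums by (simp add: sums_iff)
  moreover have "(\<lambda>s. exp (\<rho> * \<bar>s\<bar>)) \<in> borel_measurable M"
    using sets by (simp add: measurable_cong_sets[OF sets refl])
  moreover have "norm (exp (\<rho> * \<bar>s\<bar>)) \<le> norm (2 * cosh (\<rho> * s))" for s
    by (cases "s \<ge> 0") (simp_all add: cosh_def)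
  ultimately show ?thesis
    using \<open>\<rho> > 0\<close> by (blast intro: Bochner_Integration.integrable_bound)
qed

lemma Qpoly_recurrence:
  "s * poly (Qpoly l e j) s = poly (Qpoly l e (Suc j)) s + l * real (Suc j) * poly (Qpoly l e j) s
     + e * real j * real (Suc j) * poly (Qpoly l e (j - 1)) s"
  by (cases j) (simp_all add: algebra_simps)

definition Q_moment :: "real \<Rightarrow> real \<Rightarrow> real measure \<Rightarrow> nat \<Rightarrow> nat \<Rightarrow> real" where
  "Q_moment l e M j i = (\<integral>s. s ^ j * poly (Qpoly l e i) s \<partial>M)"

context
  fixes l e :: real and M :: "real measure"
  assumes orth: "orth_measure l e M"
begin

lemma Q_moment_0: "Q_moment l e M 0 i = (if i = 0 then 1 else 0)"
  unfolding Q_moment_def using orth_measure_integral_Qpoly[OF orth] by simp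

lemma Q_moment_Suc:
  "Q_moment l e M (Suc j) i =
     Q_moment l e M j (Suc i) + l * real (Suc i) * Q_moment l e M j i + e * real i * real (Suc i) * Q_moment l e M j (i - 1)"
proof -
  have int: "integrable M (\<lambda>s. s ^ j * poly p s)" for p
    using orth_measure_integrable_poly[OF orth, of "monom 1 j * p"] by (simp add: poly_monom)
  have "Q_moment l e M (Suc j) i = (\<integral>s. s ^ j * (s * poly (Qpoly l e i) s) \<partial>M)"
    unfolding Q_moment_def by (simp add: algebra_simps)
  also have "\<dots> = (\<integral>s. s ^ j * poly (Qpoly l e (Suc i)) s + (l * real (Suc i)) * (s ^ j * poly (Qpoly l e i) s)
       + (e * real i * real (Suc i)) * (s ^ j * poly (Qpoly l e (i - 1)) s) \<partial>M)"
    unfolding Qpoly_recurrence by (simp add: algebra_simps)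
  also have "\<dots> = Q_moment l e M j (Suc i) + l * real (Suc i) * Q_moment l e M j i
      + e * real i * real (Suc i) * Q_moment l e M j (i - 1)"
    unfolding Q_moment_def using int by simp
  finally show ?thesis .
qed

lemma Q_moment_eq_0: "j < i \<Longrightarrow> Q_moment l e M j i = 0"
  by (induction j arbitrary: i) (simp_all add: Q_moment_0 Q_moment_Suc)

text \<open>Since \<open>Q_moment j i = 0\<close> for \<open>i > j\<close>, the coefficients \<open>i + 1\<close> and \<open>i (i + 1)\<close> in the
  recurrence never exceed \<open>N + 1\<close> and \<open>(N + 1)\<^sup>2\<close> while \<open>j \<le> N\<close>.\<close>
lemma Q_moment_bound:
  assumes "e \<ge> 0" "j \<le> N"
  shows "\<bar>Q_moment l e M j i\<bar> \<le> (1 + \<bar>l\<bar> + e) ^ j * real (N + 1) ^ (j + i)"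
  using assms(2)
proof (induction j arbitrary: i)
  case 0
  show ?case by (simp add: Q_moment_0)
next
  case (Suc j)
  define B where "B = 1 + \<bar>l\<bar> + e"
  define K where "K = real (N + 1)"
  have "B \<ge> 1" "K \<ge> 1" using \<open>e \<ge> 0\<close> by (simp_all add: B_def K_def)
  show ?case
  proof (cases "i \<le> Suc j")
    case False
    then show ?thesis
      using Q_moment_eq_0[of "Suc j" i] \<open>B \<ge> 1\<close> \<open>K \<ge> 1\<close> by (simp add: B_def K_def)
  next
    case True
    then have iK: "real (Suc i) \<le> K" using Suc.prems by (simp add: K_def)
    have IH: "\<bar>Q_moment l e M j k\<bar> \<le> B ^ j * K ^ (j + k)" for k
      using Suc by (simp add: B_def K_def)
    have t2: "\<bar>l\<bar> * real (Suc i) * \<bar>Q_moment l e M j i\<bar> \<le> \<bar>l\<bar> * (B ^ j * K ^ (j + i + 1))"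
    proof -
      have "real (Suc i) * \<bar>Q_moment l e M j i\<bar> \<le> K * (B ^ j * K ^ (j + i))"
        using IH[of i] iK by (intro mult_mono) auto
      also have "\<dots> = B ^ j * K ^ (j + i + 1)"
        by (simp add: algebra_simps)
      finally show ?thesis
        by (simp add: mult.assoc mult_left_mono)
    qed
    have t3: "e * real i * real (Suc i) * \<bar>Q_moment l e M j (i - 1)\<bar> \<le> e * (B ^ j * K ^ (j + i + 1))"
    proof (cases i)
      case (Suc i')
      have "real i * real (Suc i) * \<bar>Q_moment l e M j (i - 1)\<bar> \<le> (K * K) * (B ^ j * K ^ (j + i'))"
        using IH[of i'] iK Suc by (intro mult_mono) auto
      also have "\<dots> = B ^ j * K ^ (j + i + 1)"
        using Suc by (simp add: power_add algebra_simps)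
      finally show ?thesis
        using \<open>e \<ge> 0\<close> by (simp add: mult.assoc mult_left_mono)
    qed (use \<open>e \<ge> 0\<close> \<open>B \<ge> 1\<close> \<open>K \<ge> 1\<close> in simp)
    have "\<bar>Q_moment l e M (Suc j) i\<bar> \<le> \<bar>Q_moment l e M j (Suc i)\<bar> + \<bar>l\<bar> * real (Suc i) * \<bar>Q_moment l e M j i\<bar>
        + e * real i * real (Suc i) * \<bar>Q_moment l e M j (i - 1)\<bar>"
      unfolding Q_moment_Suc using \<open>e \<ge> 0\<close> by (simp add: abs_mult order_trans[OF abs_triangle_ineq] add_mono)
    also have "\<dots> \<le> B ^ j * K ^ (j + i + 1) + \<bar>l\<bar> * (B ^ j * K ^ (j + i + 1)) + e * (B ^ j * K ^ (j + i + 1))"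
      using IH[of "Suc i"] t2 t3 by simp
    also have "\<dots> = B ^ Suc j * K ^ (Suc j + i)"
      by (simp add: B_def algebra_simps)
    finally show ?thesis
      by (simp add: B_def K_def)
  qed
qed

lemma orth_measure_moment_bound:
  assumes "e \<ge> 0"
  shows "\<bar>\<integral>s. s ^ n \<partial>M\<bar> \<le> exp 1 * ((1 + \<bar>l\<bar> + e) * exp 1) ^ n * fact n"
proof -
  have "real (n + 1) ^ n / fact n = real (n + 1) ^ (n + 1) / fact (n + 1)"
    by (simp add: fact_Suc del: of_nat_Suc)
  also have "\<dots> \<le> exp (real (n + 1))"
    by (rule power_div_fact_le_exp) simp
  also have "\<dots> = exp 1 * exp 1 ^ n"
    by (simp add: exp_of_nat_mult[symmetric] exp_add[symmetric] algebra_simps)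
  finally have fact_bound: "real (n + 1) ^ n \<le> exp 1 * exp 1 ^ n * fact n"
    by (simp add: field_simps)
  have "\<bar>\<integral>s. s ^ n \<partial>M\<bar> \<le> (1 + \<bar>l\<bar> + e) ^ n * real (n + 1) ^ n"
    using Q_moment_bound[OF assms, of n n 0] by (simp add: Q_moment_def)
  also have "\<dots> \<le> (1 + \<bar>l\<bar> + e) ^ n * (exp 1 * exp 1 ^ n * fact n)"
    using assms by (intro mult_left_mono fact_bound) simp
  also have "\<dots> = exp 1 * ((1 + \<bar>l\<bar> + e) * exp 1) ^ n * fact n"
    by (simp add: power_mult_distrib)
  finally show ?thesis .
qed

lemma orth_measure_exp_abs_integrable:
  assumes "e \<ge> 0"
  shows "\<exists>\<rho>>0. integrable M (\<lambda>s. exp (\<rho> * \<bar>s\<bar>))"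
proof (rule exp_abs_integrable_of_moment_bound)
  show "\<bar>\<integral>s. s ^ n \<partial>M\<bar> \<le> exp 1 * ((1 + \<bar>l\<bar> + e) * exp 1) ^ n * fact n" for n
    by (rule orth_measure_moment_bound[OF assms])
qed (use orth assms in \<open>auto simp: orth_measure_def intro: add_pos_nonneg\<close>)

end

section \<open>Passage to the limit\<close>

lemma integral_difference_quotient_taylor_poly_tendsto:
  assumes F: "F \<in> Emin" and sets: "sets M = sets borel"
    and "\<rho> > 0" and exp_integrable: "integrable M (\<lambda>s. exp (\<rho> * \<bar>s\<bar>))"
  shows "integrable M (difference_quotient F x)"
    and "(\<lambda>N. \<integral>s. difference_quotient (poly (taylor_poly F N)) x s \<partial>M) \<longlonglongrightarrow> (\<integral>s. difference_quotient F x s \<partial>M)"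
proof -
  obtain C where "C \<ge> 0" and C: "\<And>n. norm (taylor_coeff F n) * fact n \<le> C * \<rho> ^ n"
    using Emin_taylor_coeff_bound[OF F \<open>\<rho> > 0\<close>] by blast
  have "norm (taylor_coeff (poly (taylor_poly F N)) n) * fact n \<le> C * \<rho> ^ n" for N n
    using C[of n] \<open>C \<ge> 0\<close> \<open>\<rho> > 0\<close> by (simp add: taylor_coeff_poly coeff_taylor_poly)
  then have bound: "norm (difference_quotient (poly (taylor_poly F N)) x s)
      \<le> C * \<rho> * exp (\<rho> * \<bar>x\<bar>) * exp (\<rho> * \<bar>s\<bar>)" for N s
    using \<open>C \<ge> 0\<close> \<open>\<rho> > 0\<close> by (intro norm_difference_quotient_le) (auto intro: holomorphic_intros)
  define w where "w s = C * \<rho> * exp (\<rho> * \<bar>x\<bar>) * exp (\<rho> * \<bar>s\<bar>)" for s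
  have w: "integrable M w"
    unfolding w_def using exp_integrable by (rule integrable_mult_right)
  have lim: "AE s in M. (\<lambda>N. difference_quotient (poly (taylor_poly F N)) x s) \<longlonglongrightarrow> difference_quotient F x s"
    using difference_quotient_taylor_poly_tendsto[OF F] by simp
  have dominated: "\<And>N. AE s in M. norm (difference_quotient (poly (taylor_poly F N)) x s) \<le> w s"
    unfolding w_def using bound by simp
  note convergence = difference_quotient_measurable[OF F sets] difference_quotient_measurable[OF Emin_poly sets]
    w lim dominated
  show "integrable M (difference_quotient F x)"
    by (rule integrable_dominated_convergence[OF convergence])
  show "(\<lambda>N. \<integral>s. difference_quotient (poly (taylor_poly F N)) x s \<partial>M) \<longlonglongrightarrow> (\<integral>s. difference_quotient F x s \<partial>M)"
    by (rule integral_dominated_convergence[OF convergence])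
qed

lemma lowering_ext_taylor_poly_tendsto:
  assumes low: "lowering_ext l e D" and F: "F \<in> Emin"
  shows "(\<lambda>N. D (poly (taylor_poly F N)) z) \<longlonglongrightarrow> D F z"
proof -
  define Fs where "Fs N = poly (taylor_poly F N)" for N
  have Fs: "Fs N \<in> Emin" for N
    unfolding Fs_def by (rule Emin_poly)
  have D_Emin: "D G \<in> Emin" if "G \<in> Emin" for G
    using low that unfolding lowering_ext_def by blast
  have "\<forall>q. (\<lambda>N. Nnorm q (\<lambda>z. Fs N z - F z)) \<longlonglongrightarrow> 0"
    unfolding Fs_def using Nnorm_taylor_poly_diff_tendsto[OF F] by blast
  then have "\<forall>q. (\<lambda>N. Nnorm q (\<lambda>z. D (Fs N) z - D F z)) \<longlonglongrightarrow> 0"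
    using low Fs F unfolding lowering_ext_def by blast
  then have "(\<lambda>N. Nnorm 0 (\<lambda>z. D (Fs N) z - D F z)) \<longlonglongrightarrow> 0"
    by blast
  from tendsto_real_sqrt[OF this]
  have majorant: "(\<lambda>N. sqrt (Nnorm 0 (\<lambda>z. D (Fs N) z - D F z)) * exp (norm z)) \<longlonglongrightarrow> 0"
    by (simp add: tendsto_mult_left_zero)
  have bound: "norm (D (Fs N) z - D F z) \<le> sqrt (Nnorm 0 (\<lambda>z. D (Fs N) z - D F z)) * exp (norm z)" for N
    using norm_le_Nnorm_0[OF Emin_diff[OF D_Emin[OF Fs] D_Emin[OF F]]] by simp
  have "(\<lambda>N. D (Fs N) z - D F z) \<longlonglongrightarrow> 0"
    by (rule Lim_null_comparison[OF always_eventually[OF allI[OF bound]] majorant])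
  then show ?thesis
    unfolding Fs_def by (rule LIM_zero_cancel)
qed

theorem mainTheorem1:
  fixes lam eta :: real and M :: "real measure"
    and D :: "(complex \<Rightarrow> complex) \<Rightarrow> (complex \<Rightarrow> complex)"
    and F :: "complex \<Rightarrow> complex" and x :: real
  assumes "eta \<ge> 0"
    and "orth_measure lam eta M"
    and "lowering_ext lam eta D"
    and "F \<in> Emin"
  shows "integrable M (\<lambda>s. if s = 0 then deriv F (of_real x)
            else (F (of_real (x + s)) - F (of_real x)) / of_real s)
    \<and> D F (of_real x) = (\<integral>s. (if s = 0 then deriv F (of_real x)
            else (F (of_real (x + s)) - F (of_real x)) / of_real s) \<partial>M)"
proof -
  obtain \<rho> where "\<rho> > 0" and exp_integrable: "integrable M (\<lambda>s. exp (\<rho> * \<bar>s\<bar>))"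
    using orth_measure_exp_abs_integrable[OF assms(2,1)] by blast
  have "sets M = sets borel"
    using assms(2) unfolding orth_measure_def by blast
  note integral_limit = integral_difference_quotient_taylor_poly_tendsto[OF assms(4) this \<open>\<rho> > 0\<close> exp_integrable]
  have "D (poly (taylor_poly F N)) (of_real x) = (\<integral>s. difference_quotient (poly (taylor_poly F N)) x s \<partial>M)" for N
    using lowering_integral_formula_poly[OF assms(2,3)] unfolding lowering_integral_formula_def by blast
  then have "(\<lambda>N. D (poly (taylor_poly F N)) (of_real x)) \<longlonglongrightarrow> (\<integral>s. difference_quotient F x s \<partial>M)"
    using integral_limit(2) by simp
  then have "D F (of_real x) = (\<integral>s. difference_quotient F x s \<partial>M)"
    by (rule LIMSEQ_unique[OF lowering_ext_taylor_poly_tendsto[OF assms(3,4)]])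
  then show ?thesis
    using integral_limit(1) unfolding difference_quotient_def[abs_def] by simp
qed

end
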